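(* Let $n\ge2$ and let $\mathbb{A}=(A_{ij})_{i,j=1}^n$ be an operator matrix as in the context. Assume that for every permutation $\pi$ of $\{1,\ldots,n\}$, $\mathbb{A}(\pi)_k$ is closed for every $k\in\{2,\ldots,n\}$. Then $\sigma(\mathbb{A})\subset\bigcap_{k=1}^nS^*_k(\mathbb{A})$.
   Context: Let $X_1,\ldots,X_n$ be complex Banach spaces and $X=X_1\times\cdots\times X_n$ with norm $\|x\|=\sum_i\|x_i\|_{X_i}$. For $i,j$, $A_{ij}:\mathcal{D}(A_{ij})\subset X_j\to X_i$ are linear, $A_{ii}$ closed, and for $i\ne j$ $A_{ij}$ is relatively $A_{jj}$-bounded ($\mathcal{D}(A_{jj})\subset\mathcal{D}(A_{ij})$ and $\|A_{ij}x\|\le\alpha\|x\|+\beta\|A_{jj}x\|$ for some $\alpha,\beta\ge0$). $\mathbb{A}=(A_{ij})$ acts on $\mathcal{D}(A_{11})\times\cdots\times\mathcal{D}(A_{nn})$ by $(\mathbb{A}x)_i=\sum_jA_{ij}x_j$. For a permutation $\pi$, $\mathbb{A}(\pi):=(A_{\pi^{-1}(i),\pi^{-1}(j)})_{i,j=1}^n$ acts on $X_{\pi^{-1}(1)}\times\cdots\times X_{\pi^{-1}(n)}$ with domain $\prod_i\mathcal{D}(A_{\pi^{-1}(i),\pi^{-1}(i)})$; $\mathbb{B}_k$ is the upper-left $k\times k$ block of such a matrix $\mathbb{B}$, with domain the product of the first $k$ diagonal domains. $\sigma(S)$ is the set of $\lambda$ for which $\lambda-S$ is not bijective from $\mathcal{D}(S)$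 with bounded inverse. For $j\ne k$ and $\lambda\notin\sigma(A_{kk})\cup\sigma(A_{jj})$ set \[ \mathcal{R}^*_{kj}(\lambda):=\sum_{i=1,i\ne k}^n\Big(\|A_{ik}(\lambda-A_{kk})^{-1}A_{kj}(\lambda-A_{jj})^{-1}\|+\|(1-\delta_{ij})A_{ij}(\lambda-A_{jj})^{-1}\|\Big), \] the modified Schur sets $S^*_{kj}(\mathbb{A}):=\sigma(A_{kk})\cup\sigma(A_{jj})\cup\{\lambda\notin\sigma(A_{kk})\cup\sigma(A_{jj}):\mathcal{R}^*_{kj}(\lambda)\ge1\}$, and $S^*_k(\mathbb{A}):=\bigcup_{j\ne k}S^*_{kj}(\mathbb{A})$. *)

theory Defs
  imports "HOL-Analysis.Analysis" "HOL-Combinatorics.Permutations" "HOL-Library.Function_Algebras"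
begin

text \<open>A complex Banach space is encoded as a real Banach space type together with a
  complex scalar multiplication extending the real one and homogeneous for the norm.\<close>
definition cbanach :: "(complex \<Rightarrow> 'a::banach \<Rightarrow> 'a) \<Rightarrow> bool" where
  "cbanach sm \<longleftrightarrow> vector_space sm \<and> (\<forall>r x. sm (complex_of_real r) x = r *\<^sub>R x)
      \<and> (\<forall>c x. norm (sm c x) = cmod c * norm x)"

definition csubspace :: "(complex \<Rightarrow> 'a::banach \<Rightarrow> 'a) \<Rightarrow> 'a set \<Rightarrow> bool" where
  "csubspace sm S \<longleftrightarrow> 0 \<in> S \<and> (\<forall>x\<in>S. \<forall>y\<in>S. x + y \<in> S) \<and> (\<forall>c. \<forall>x\<in>S. sm c x \<in> S)"

definition clinear_on :: "(complex \<Rightarrow> 'a::banach \<Rightarrow> 'a) \<Rightarrow> 'a set \<Rightarrow> ('a \<Rightarrow> 'a) \<Rightarrow> bool" where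
  "clinear_on sm D T \<longleftrightarrow> csubspace sm D \<and> (\<forall>x\<in>D. \<forall>y\<in>D. T (x + y) = T x + T y)
      \<and> (\<forall>c. \<forall>x\<in>D. T (sm c x) = sm c (T x))"

definition closed_op :: "('v::ab_group_add \<Rightarrow> real) \<Rightarrow> 'v set \<Rightarrow> 'v set \<Rightarrow> ('v \<Rightarrow> 'v) \<Rightarrow> bool" where
  "closed_op nrm E D T \<longleftrightarrow> (\<forall>xs x y. (\<forall>m. xs m \<in> D) \<and> x \<in> E \<and> y \<in> E
      \<and> ((\<lambda>m. nrm (xs m - x)) \<longlonglongrightarrow> 0) \<and> ((\<lambda>m. nrm (T (xs m) - y)) \<longlonglongrightarrow> 0)
      \<longrightarrow> x \<in> D \<and> T x = y)"

definition gspec :: "(complex \<Rightarrow> 'v::ab_group_add \<Rightarrow> 'v) \<Rightarrow> ('v \<Rightarrow> real) \<Rightarrow> 'v set \<Rightarrow> 'v set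
    \<Rightarrow> ('v \<Rightarrow> 'v) \<Rightarrow> complex set" where
  "gspec sm nrm E D T = {l. \<not> (bij_betw (\<lambda>x. sm l x - T x) D E \<and>
      (\<exists>C. \<forall>y\<in>E. nrm (inv_into D (\<lambda>x. sm l x - T x) y) \<le> C * nrm y))}"

definition resolv :: "(complex \<Rightarrow> 'v \<Rightarrow> 'v::ab_group_add) \<Rightarrow> 'v set \<Rightarrow> ('v \<Rightarrow> 'v) \<Rightarrow> complex \<Rightarrow> 'v \<Rightarrow> 'v" where
  "resolv sm D T l = inv_into D (\<lambda>x. sm l x - T x)"

definition opnorm_on :: "'a set \<Rightarrow> ('a::real_normed_vector \<Rightarrow> 'a) \<Rightarrow> real" where
  "opnorm_on S f = Sup ((\<lambda>x. norm (f x)) ` {x \<in> S. norm x \<le> 1})"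

text \<open>Product space X_{idx 1} x ... x X_{idx k} (functions on {1..k}, zero elsewhere),
  its l1-norm, and the upper-left k x k block of the matrix (A_{idx i, idx j}).\<close>
definition prodsp :: "(nat \<Rightarrow> 'a::zero set) \<Rightarrow> (nat \<Rightarrow> nat) \<Rightarrow> nat \<Rightarrow> (nat \<Rightarrow> 'a) set" where
  "prodsp Y idx k = {x. (\<forall>i\<in>{1..k}. x i \<in> Y (idx i)) \<and> (\<forall>i. i \<notin> {1..k} \<longrightarrow> x i = 0)}"

definition prodnorm :: "nat \<Rightarrow> (nat \<Rightarrow> 'a::real_normed_vector) \<Rightarrow> real" where
  "prodnorm k x = (\<Sum>i\<in>{1..k}. norm (x i))"

definition prodsm :: "(complex \<Rightarrow> 'a \<Rightarrow> 'a) \<Rightarrow> complex \<Rightarrow> (nat \<Rightarrow> 'a) \<Rightarrow> (nat \<Rightarrow> 'a)" where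
  "prodsm sm c x = (\<lambda>i. sm c (x i))"

definition blockop :: "(nat \<Rightarrow> nat \<Rightarrow> 'a \<Rightarrow> 'a::comm_monoid_add) \<Rightarrow> (nat \<Rightarrow> nat) \<Rightarrow> nat
    \<Rightarrow> (nat \<Rightarrow> 'a) \<Rightarrow> (nat \<Rightarrow> 'a)" where
  "blockop A idx k x = (\<lambda>i. if i \<in> {1..k} then (\<Sum>j\<in>{1..k}. A (idx i) (idx j) (x j)) else 0)"

definition blockdom :: "(nat \<Rightarrow> nat \<Rightarrow> 'a::zero set) \<Rightarrow> (nat \<Rightarrow> nat) \<Rightarrow> nat \<Rightarrow> (nat \<Rightarrow> 'a) set" where
  "blockdom Dom idx k = prodsp (\<lambda>i. Dom i i) idx k"

definition Rstar :: "(complex \<Rightarrow> 'a \<Rightarrow> 'a) \<Rightarrow> nat \<Rightarrow> (nat \<Rightarrow> 'a::real_normed_vector set)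
    \<Rightarrow> (nat \<Rightarrow> nat \<Rightarrow> 'a set) \<Rightarrow> (nat \<Rightarrow> nat \<Rightarrow> 'a \<Rightarrow> 'a) \<Rightarrow> nat \<Rightarrow> nat \<Rightarrow> complex \<Rightarrow> real" where
  "Rstar sm n X Dom A k j l = (\<Sum>i\<in>{1..n} - {k}.
      opnorm_on (X j) (A i k \<circ> resolv sm (Dom k k) (A k k) l \<circ> A k j \<circ> resolv sm (Dom j j) (A j j) l)
      + (if i = j then 0 else opnorm_on (X j) (A i j \<circ> resolv sm (Dom j j) (A j j) l)))"

definition Sstar2 :: "(complex \<Rightarrow> 'a \<Rightarrow> 'a) \<Rightarrow> nat \<Rightarrow> (nat \<Rightarrow> 'a::real_normed_vector set)
    \<Rightarrow> (nat \<Rightarrow> nat \<Rightarrow> 'a set) \<Rightarrow> (nat \<Rightarrow> nat \<Rightarrow> 'a \<Rightarrow> 'a) \<Rightarrow> nat \<Rightarrow> nat \<Rightarrow> complex set" where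
  "Sstar2 sm n X Dom A k j =
     (let sk = gspec sm norm (X k) (Dom k k) (A k k); sj = gspec sm norm (X j) (Dom j j) (A j j)
      in sk \<union> sj \<union> {l. l \<notin> sk \<union> sj \<and> Rstar sm n X Dom A k j l \<ge> 1})"

definition Sstar :: "(complex \<Rightarrow> 'a \<Rightarrow> 'a) \<Rightarrow> nat \<Rightarrow> (nat \<Rightarrow> 'a::real_normed_vector set)
    \<Rightarrow> (nat \<Rightarrow> nat \<Rightarrow> 'a set) \<Rightarrow> (nat \<Rightarrow> nat \<Rightarrow> 'a \<Rightarrow> 'a) \<Rightarrow> nat \<Rightarrow> complex set" where
  "Sstar sm n X Dom A k = (\<Union>j\<in>{1..n} - {k}. Sstar2 sm n X Dom A k j)"

end

theory Submission
  imports Defs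
begin

(* Fix k and lambda outside S*_k.  Then lambda lies in the resolvent set of every diagonal entry
   A_jj; write R_j = (lambda - A_jj)^-1.  The substitution u_j = (lambda - A_jj) x_j for j ~= k,
   x_k = R_k (y_k + sum_{j~=k} A_kj R_j u_j) turns (lambda - A) x = y into the fixed-point equation
   u = y' + M u on the l1-sum of the X_j, j ~= k, where
   M_ij = (1 - delta_ij) A_ij R_j + A_ik R_k A_kj R_j.
   The column sums of the operator norms of the M_ij are exactly R*_kj(lambda) < 1, so M is a
   contraction, and Banach's fixed point theorem gives unique solvability with a solution depending
   boundedly on y.  Hence lambda is not in the spectrum of A. *)

definition linear_on :: "'a::real_vector set \<Rightarrow> 'b::real_vector set \<Rightarrow> ('a \<Rightarrow> 'b) \<Rightarrow> bool" where
  "linear_on S T f \<longleftrightarrow> f ` S \<subseteq> T \<and> (\<forall>x\<in>S. \<forall>y\<in>S. f (x + y) = f x + f y)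
     \<and> (\<forall>r. \<forall>x\<in>S. f (r *\<^sub>R x) = r *\<^sub>R f x)"

definition bounded_on :: "'a::real_normed_vector set \<Rightarrow> ('a \<Rightarrow> 'b::real_normed_vector) \<Rightarrow> bool" where
  "bounded_on S f \<longleftrightarrow> (\<exists>C. \<forall>x\<in>S. norm (f x) \<le> C * norm x)"

lemma linear_on_imageD: "linear_on S T f \<Longrightarrow> x \<in> S \<Longrightarrow> f x \<in> T"
  unfolding linear_on_def by blast

lemma linear_on_add: "linear_on S T f \<Longrightarrow> x \<in> S \<Longrightarrow> y \<in> S \<Longrightarrow> f (x + y) = f x + f y"
  unfolding linear_on_def by blast

lemma linear_on_scaleR: "linear_on S T f \<Longrightarrow> x \<in> S \<Longrightarrow> f (r *\<^sub>R x) = r *\<^sub>R f x"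
  unfolding linear_on_def by blast

lemma linear_on_diff:
  assumes "linear_on S T f" "subspace S" "x \<in> S" "y \<in> S"
  shows "f (x - y) = f x - f y"
proof -
  have "(- 1) *\<^sub>R y \<in> S" using assms(2,4) by (rule subspace_scale)
  then have "f (x + (- 1) *\<^sub>R y) = f x + f ((- 1) *\<^sub>R y)" by (rule linear_on_add[OF assms(1,3)])
  also have "f ((- 1) *\<^sub>R y) = (- 1) *\<^sub>R f y" by (rule linear_on_scaleR[OF assms(1,4)])
  finally show ?thesis by simp
qed

lemma linear_on_sum:
  assumes "linear_on S T f" "subspace S" "\<And>j. j \<in> F \<Longrightarrow> g j \<in> S"
  shows "f (sum g F) = (\<Sum>j\<in>F. f (g j))"
  using assms(3)
proof (induction F rule: infinite_finite_induct)
  case (insert x F)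
  then show ?case
    using linear_on_add[OF assms(1)] subspace_sum[OF assms(2), of F g] by simp
qed (use linear_on_scaleR[OF assms(1) subspace_0[OF assms(2)], of 0] in simp_all)

lemma linear_on_zero_fun: "subspace T \<Longrightarrow> linear_on S T (\<lambda>x. 0)"
  unfolding linear_on_def by (auto simp: subspace_0)

lemma linear_on_add_fun:
  "linear_on S T f \<Longrightarrow> linear_on S T g \<Longrightarrow> subspace T \<Longrightarrow> linear_on S T (\<lambda>x. f x + g x)"
  unfolding linear_on_def image_subset_iff by (simp add: subspace_add algebra_simps)

lemma linear_on_compose:
  "linear_on S T g \<Longrightarrow> linear_on T U f \<Longrightarrow> linear_on S U (\<lambda>x. f (g x))"
  unfolding linear_on_def image_subset_iff by simp

lemma bounded_onE:
  assumes "bounded_on S f"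
  obtains C where "C \<ge> 0" "\<And>x. x \<in> S \<Longrightarrow> norm (f x) \<le> C * norm x"
proof -
  obtain C where "\<And>x. x \<in> S \<Longrightarrow> norm (f x) \<le> C * norm x"
    using assms unfolding bounded_on_def by blast
  then have "\<And>x. x \<in> S \<Longrightarrow> norm (f x) \<le> \<bar>C\<bar> * norm x"
    by (meson abs_ge_self mult_right_mono norm_ge_zero order_trans)
  then show thesis using that[of "\<bar>C\<bar>"] by simp
qed

lemma bounded_on_compose:
  assumes "bounded_on S g" "bounded_on T f" "g ` S \<subseteq> T"
  shows "bounded_on S (\<lambda>x. f (g x))"
proof -
  obtain C where "C \<ge> 0" and C: "\<And>x. x \<in> S \<Longrightarrow> norm (g x) \<le> C * norm x"
    using bounded_onE[OF assms(1)] by blast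
  obtain D where "D \<ge> 0" and D: "\<And>x. x \<in> T \<Longrightarrow> norm (f x) \<le> D * norm x"
    using bounded_onE[OF assms(2)] by blast
  have "norm (f (g x)) \<le> (D * C) * norm x" if "x \<in> S" for x
  proof -
    have "norm (f (g x)) \<le> D * norm (g x)" using D assms(3) that by blast
    also have "\<dots> \<le> D * (C * norm x)" using C[OF that] \<open>D \<ge> 0\<close> by (rule mult_left_mono)
    finally show ?thesis by simp
  qed
  then show ?thesis unfolding bounded_on_def by blast
qed

lemma bounded_on_uniform:
  assumes "finite I" "\<And>i. i \<in> I \<Longrightarrow> bounded_on (S i) (f i)"
  obtains C where "C \<ge> 0" "\<And>i x. i \<in> I \<Longrightarrow> x \<in> S i \<Longrightarrow> norm (f i x) \<le> C * norm x"
proof -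
  obtain c where c: "\<And>i x. i \<in> I \<Longrightarrow> x \<in> S i \<Longrightarrow> norm (f i x) \<le> c i * norm x"
    using assms(2) unfolding bounded_on_def by metis
  have "norm (f i x) \<le> (\<Sum>i\<in>I. \<bar>c i\<bar>) * norm x" if "i \<in> I" "x \<in> S i" for i x
  proof -
    have "c i \<le> (\<Sum>i\<in>I. \<bar>c i\<bar>)"
      using member_le_sum[of i I "\<lambda>i. \<bar>c i\<bar>"] assms(1) that(1) by simp
    then show ?thesis using c[OF that] by (meson mult_right_mono norm_ge_zero order_trans)
  qed
  then show thesis using that[of "\<Sum>i\<in>I. \<bar>c i\<bar>"] by (simp add: sum_nonneg)
qed

lemma norm_le_opnorm_on:
  fixes f :: "'a::real_normed_vector \<Rightarrow> 'a"
  assumes "subspace S" "linear_on S T f" "bounded_on S f" "x \<in> S"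
  shows "norm (f x) \<le> opnorm_on S f * norm x"
proof -
  obtain C where "C \<ge> 0" and C: "\<And>x. x \<in> S \<Longrightarrow> norm (f x) \<le> C * norm x"
    using bounded_onE[OF assms(3)] by blast
  let ?V = "(\<lambda>x. norm (f x)) ` {x \<in> S. norm x \<le> 1}"
  have bdd: "bdd_above ?V"
  proof (rule bdd_aboveI)
    fix v assume "v \<in> ?V"
    then obtain z where z: "z \<in> S" "norm z \<le> 1" "v = norm (f z)" by blast
    have "v \<le> C * norm z" using C[OF z(1)] z(3) by simp
    also have "\<dots> \<le> C" using z(2) \<open>C \<ge> 0\<close> by (simp add: mult_left_le)
    finally show "v \<le> C" .
  qed
  show ?thesis
  proof (cases "x = 0")
    case True
    then show ?thesis using C[OF assms(4)] by simp
  next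
    case False
    let ?y = "(1 / norm x) *\<^sub>R x"
    have "?y \<in> S" using assms(1,4) by (simp add: subspace_scale)
    with False have "norm (f ?y) \<in> ?V" by force
    then have "norm (f ?y) \<le> opnorm_on S f" unfolding opnorm_on_def using cSup_upper[OF _ bdd] by blast
    moreover have "norm (f ?y) = norm (f x) / norm x"
      using linear_on_scaleR[OF assms(2,4)] by simp
    ultimately show ?thesis using False by (simp add: divide_le_eq)
  qed
qed

definition direct_sum :: "'i set \<Rightarrow> ('i \<Rightarrow> 'a::zero set) \<Rightarrow> ('i \<Rightarrow> 'a) set" where
  "direct_sum I X = {u. (\<forall>i\<in>I. u i \<in> X i) \<and> (\<forall>i. i \<notin> I \<longrightarrow> u i = 0)}"

definition l1_dist :: "'i set \<Rightarrow> ('i \<Rightarrow> 'a::real_normed_vector) \<Rightarrow> ('i \<Rightarrow> 'a) \<Rightarrow> real" where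
  "l1_dist I u v = (\<Sum>i\<in>I. norm (u i - v i))"

lemma mem_direct_sum_iff: "u \<in> direct_sum I X \<longleftrightarrow> (\<forall>i\<in>I. u i \<in> X i) \<and> (\<forall>i. i \<notin> I \<longrightarrow> u i = 0)"
  unfolding direct_sum_def by simp

lemma direct_sum_memD: "u \<in> direct_sum I X \<Longrightarrow> i \<in> I \<Longrightarrow> u i \<in> X i"
  unfolding direct_sum_def by blast

lemma Metric_space_l1_dist: "finite I \<Longrightarrow> Metric_space (direct_sum I X) (l1_dist I)"
proof unfold_locales
  fix u v :: "'a \<Rightarrow> 'b"
  assume "finite I" "u \<in> direct_sum I X" "v \<in> direct_sum I X"
  then have "l1_dist I u v = 0 \<longleftrightarrow> (\<forall>i\<in>I. u i = v i)"
    unfolding l1_dist_def by (simp add: sum_nonneg_eq_0_iff)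
  also have "\<dots> \<longleftrightarrow> u = v"
    using \<open>u \<in> direct_sum I X\<close> \<open>v \<in> direct_sum I X\<close>
    unfolding mem_direct_sum_iff fun_eq_iff by metis
  finally show "l1_dist I u v = 0 \<longleftrightarrow> u = v" .
next
  fix u v w :: "'a \<Rightarrow> 'b"
  show "l1_dist I u w \<le> l1_dist I u v + l1_dist I v w"
    unfolding l1_dist_def sum.distrib[symmetric] by (rule sum_mono, rule norm_diff_triangle_le) (rule order.refl)+
qed (simp_all add: l1_dist_def sum_nonneg norm_minus_commute)

lemma mcomplete_l1_dist:
  fixes X :: "'i \<Rightarrow> 'a::banach set"
  assumes "finite I" and closed: "\<And>i. i \<in> I \<Longrightarrow> closed (X i)"
  shows "Metric_space.mcomplete (direct_sum I X) (l1_dist I)"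
proof -
  interpret Metric_space "direct_sum I X" "l1_dist I" using Metric_space_l1_dist[OF assms(1)] .
  show ?thesis unfolding mcomplete_def
  proof (intro allI impI)
    fix \<sigma> assume Cauchy_\<sigma>: "MCauchy \<sigma>"
    then have in_sum: "\<And>m. \<sigma> m \<in> direct_sum I X" unfolding MCauchy_def by blast
    have component_le: "norm (\<sigma> m i - \<sigma> p i) \<le> l1_dist I (\<sigma> m) (\<sigma> p)" if "i \<in> I" for m p i
      unfolding l1_dist_def using assms(1) that by (intro member_le_sum) auto
    have "Cauchy (\<lambda>m. \<sigma> m i)" if "i \<in> I" for i
      unfolding Cauchy_iff
      using Cauchy_\<sigma> component_le[OF that] unfolding MCauchy_def by (meson order_le_less_trans)
    then have "\<forall>i\<in>I. \<exists>L. (\<lambda>m. \<sigma> m i) \<longlonglongrightarrow> L"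
      by (simp add: Cauchy_convergent_iff convergent_def)
    then obtain L where L: "\<And>i. i \<in> I \<Longrightarrow> (\<lambda>m. \<sigma> m i) \<longlonglongrightarrow> L i"
      by metis
    define L' where "L' i = (if i \<in> I then L i else 0)" for i
    have "L' \<in> direct_sum I X"
      using closed_sequentially[OF closed _ L] in_sum
      unfolding mem_direct_sum_iff L'_def by auto
    moreover have "(\<lambda>m. l1_dist I (\<sigma> m) L') \<longlonglongrightarrow> 0"
      using tendsto_sum[of I "\<lambda>i m. norm (\<sigma> m i - L' i)" "\<lambda>_. 0"] L
      unfolding l1_dist_def L'_def by (simp add: LIM_zero tendsto_norm_zero)
    ultimately have "limitin mtopology \<sigma> L' sequentially"
      unfolding limitin_metric_dist_null using in_sum by simp
    then show "\<exists>x. limitin mtopology \<sigma> x sequentially" by blast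
  qed
qed

locale operator_matrix =
  fixes sm :: "complex \<Rightarrow> 'a::banach \<Rightarrow> 'a"
    and n :: nat
    and X :: "nat \<Rightarrow> 'a set"
    and Dom :: "nat \<Rightarrow> nat \<Rightarrow> 'a set"
    and A :: "nat \<Rightarrow> nat \<Rightarrow> 'a \<Rightarrow> 'a"
  assumes cbanach: "cbanach sm"
    and X_csubspace: "i \<in> {1..n} \<Longrightarrow> csubspace sm (X i)"
    and X_closed: "i \<in> {1..n} \<Longrightarrow> closed (X i)"
    and Dom_diag_subset: "j \<in> {1..n} \<Longrightarrow> Dom j j \<subseteq> X j"
    and A_maps: "i \<in> {1..n} \<Longrightarrow> j \<in> {1..n} \<Longrightarrow> A i j ` Dom i j \<subseteq> X i"
    and A_clinear: "i \<in> {1..n} \<Longrightarrow> j \<in> {1..n} \<Longrightarrow> clinear_on sm (Dom i j) (A i j)"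
    and Dom_diag_subset_Dom: "i \<in> {1..n} \<Longrightarrow> j \<in> {1..n} \<Longrightarrow> Dom j j \<subseteq> Dom i j"
    and A_relatively_bounded: "i \<in> {1..n} \<Longrightarrow> j \<in> {1..n} \<Longrightarrow> i \<noteq> j \<Longrightarrow>
        \<exists>\<alpha> \<beta>. \<alpha> \<ge> 0 \<and> \<beta> \<ge> 0 \<and> (\<forall>x\<in>Dom j j. norm (A i j x) \<le> \<alpha> * norm x + \<beta> * norm (A j j x))"
begin

abbreviation full_space :: "(nat \<Rightarrow> 'a) set" where
  "full_space \<equiv> direct_sum {1..n} X"

abbreviation full_domain :: "(nat \<Rightarrow> 'a) set" where
  "full_domain \<equiv> direct_sum {1..n} (\<lambda>j. Dom j j)"

lemma sm_of_real: "sm (complex_of_real r) x = r *\<^sub>R x"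
  using cbanach unfolding cbanach_def by blast

lemma norm_sm: "norm (sm c x) = cmod c * norm x"
  using cbanach unfolding cbanach_def by blast

lemma sm_add_right: "sm c (x + y) = sm c x + sm c y"
  using cbanach unfolding cbanach_def vector_space_def by blast

lemma sm_sm: "sm a (sm b x) = sm (a * b) x"
  using cbanach unfolding cbanach_def vector_space_def by blast

lemma sm_zero_right: "sm c 0 = 0"
  using norm_sm[of c 0] by simp

lemma subspace_if_csubspace: "csubspace sm S \<Longrightarrow> subspace S"
  unfolding subspace_def csubspace_def by (simp add: sm_of_real[symmetric])

lemma subspace_X: "i \<in> {1..n} \<Longrightarrow> subspace (X i)"
  using X_csubspace subspace_if_csubspace by blast

lemma subspace_Dom: "i \<in> {1..n} \<Longrightarrow> j \<in> {1..n} \<Longrightarrow> subspace (Dom i j)"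
  using A_clinear subspace_if_csubspace unfolding clinear_on_def by blast

lemma linear_on_A:
  assumes "i \<in> {1..n}" "j \<in> {1..n}"
  shows "linear_on (Dom j j) (X i) (A i j)"
  unfolding linear_on_def
proof (intro conjI ballI allI)
  show "A i j ` Dom j j \<subseteq> X i" using Dom_diag_subset_Dom[OF assms] A_maps[OF assms] by blast
next
  fix x y assume "x \<in> Dom j j" "y \<in> Dom j j"
  then show "A i j (x + y) = A i j x + A i j y"
    using Dom_diag_subset_Dom[OF assms] A_clinear[OF assms] unfolding clinear_on_def by blast
next
  fix r x assume "x \<in> Dom j j"
  then show "A i j (r *\<^sub>R x) = r *\<^sub>R A i j x"
    using Dom_diag_subset_Dom[OF assms] A_clinear[OF assms]
    unfolding clinear_on_def by (metis sm_of_real subsetD)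
qed

lemma prodsp_id_eq: "prodsp Y id n = direct_sum {1..n} Y"
  unfolding prodsp_def direct_sum_def by simp

lemma blockdom_id_eq: "blockdom Dom id n = full_domain"
  unfolding blockdom_def prodsp_id_eq ..

end

locale resolvent_point = operator_matrix +
  fixes l :: complex
  assumes resolvent: "j \<in> {1..n} \<Longrightarrow> l \<notin> gspec sm norm (X j) (Dom j j) (A j j)"
begin

definition shift :: "nat \<Rightarrow> 'a \<Rightarrow> 'a" where
  "shift j x = sm l x - A j j x"

definition res :: "nat \<Rightarrow> 'a \<Rightarrow> 'a" where
  "res j = resolv sm (Dom j j) (A j j) l"

lemma res_eq_inv_into: "res j = inv_into (Dom j j) (shift j)"
  unfolding res_def resolv_def shift_def[abs_def] ..

lemma bij_betw_shift: "j \<in> {1..n} \<Longrightarrow> bij_betw (shift j) (Dom j j) (X j)"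
  using resolvent unfolding gspec_def shift_def[abs_def] by blast

lemma bounded_on_res: "j \<in> {1..n} \<Longrightarrow> bounded_on (X j) (res j)"
  using resolvent unfolding gspec_def bounded_on_def res_def resolv_def by blast

lemma res_in_Dom: "j \<in> {1..n} \<Longrightarrow> y \<in> X j \<Longrightarrow> res j y \<in> Dom j j"
  unfolding res_eq_inv_into by (metis bij_betw_imp_surj_on bij_betw_shift inv_into_into)

lemma shift_res: "j \<in> {1..n} \<Longrightarrow> y \<in> X j \<Longrightarrow> shift j (res j y) = y"
  unfolding res_eq_inv_into by (metis bij_betw_inv_into_right bij_betw_shift)

lemma res_shift: "j \<in> {1..n} \<Longrightarrow> x \<in> Dom j j \<Longrightarrow> res j (shift j x) = x"
  unfolding res_eq_inv_into by (metis bij_betw_inv_into_left bij_betw_shift)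

lemma linear_on_shift:
  assumes j: "j \<in> {1..n}"
  shows "linear_on (Dom j j) (X j) (shift j)"
  unfolding linear_on_def
proof (intro conjI ballI allI)
  show "shift j ` Dom j j \<subseteq> X j" using bij_betw_shift[OF j] by (simp add: bij_betw_def)
next
  fix x y assume "x \<in> Dom j j" "y \<in> Dom j j"
  then show "shift j (x + y) = shift j x + shift j y"
    using linear_on_add[OF linear_on_A[OF j j]] by (simp add: shift_def sm_add_right)
next
  fix r x assume "x \<in> Dom j j"
  moreover have "sm l (r *\<^sub>R x) = r *\<^sub>R sm l x"
    by (simp add: sm_of_real[symmetric] sm_sm mult.commute)
  ultimately show "shift j (r *\<^sub>R x) = r *\<^sub>R shift j x"
    using linear_on_scaleR[OF linear_on_A[OF j j]] by (simp add: shift_def scaleR_diff_right)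
qed

lemma linear_on_res:
  assumes j: "j \<in> {1..n}"
  shows "linear_on (X j) (Dom j j) (res j)"
  unfolding linear_on_def
proof (intro conjI ballI allI)
  show "res j ` X j \<subseteq> Dom j j" using res_in_Dom[OF j] by blast
next
  fix x y assume xy: "x \<in> X j" "y \<in> X j"
  then have "res j x + res j y \<in> Dom j j"
    using res_in_Dom[OF j] subspace_add[OF subspace_Dom[OF j j]] by blast
  moreover have "shift j (res j x + res j y) = x + y"
    using xy linear_on_add[OF linear_on_shift[OF j]] by (simp add: res_in_Dom[OF j] shift_res[OF j])
  ultimately show "res j (x + y) = res j x + res j y" using res_shift[OF j] by metis
next
  fix r x assume x: "x \<in> X j"
  then have "r *\<^sub>R res j x \<in> Dom j j"
    using res_in_Dom[OF j] subspace_scale[OF subspace_Dom[OF j j]] by blast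
  moreover have "shift j (r *\<^sub>R res j x) = r *\<^sub>R x"
    using x linear_on_scaleR[OF linear_on_shift[OF j]] by (simp add: res_in_Dom[OF j] shift_res[OF j])
  ultimately show "res j (r *\<^sub>R x) = r *\<^sub>R res j x" using res_shift[OF j] by metis
qed

definition AR :: "nat \<Rightarrow> nat \<Rightarrow> 'a \<Rightarrow> 'a" where
  "AR i j y = A i j (res j y)"

lemma linear_on_AR: "i \<in> {1..n} \<Longrightarrow> j \<in> {1..n} \<Longrightarrow> linear_on (X j) (X i) (AR i j)"
  unfolding AR_def[abs_def] by (rule linear_on_compose[OF linear_on_res linear_on_A])

lemma AR_in_X: "i \<in> {1..n} \<Longrightarrow> j \<in> {1..n} \<Longrightarrow> y \<in> X j \<Longrightarrow> AR i j y \<in> X i"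
  using linear_on_AR linear_on_imageD by blast

text \<open>Relative boundedness turns into boundedness after composing with the resolvent, because
  \<open>A j j (res j y) = sm l (res j y) - y\<close>.\<close>
lemma bounded_on_AR:
  assumes i: "i \<in> {1..n}" and j: "j \<in> {1..n}" and "i \<noteq> j"
  shows "bounded_on (X j) (AR i j)"
proof -
  obtain \<alpha> \<beta> where "\<alpha> \<ge> 0" "\<beta> \<ge> 0"
    and rel: "\<And>x. x \<in> Dom j j \<Longrightarrow> norm (A i j x) \<le> \<alpha> * norm x + \<beta> * norm (A j j x)"
    using A_relatively_bounded[OF i j \<open>i \<noteq> j\<close>] by blast
  obtain C where "C \<ge> 0" and C: "\<And>y. y \<in> X j \<Longrightarrow> norm (res j y) \<le> C * norm y"
    using bounded_onE[OF bounded_on_res[OF j]] by blast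
  have "norm (AR i j y) \<le> (\<alpha> * C + \<beta> * (cmod l * C + 1)) * norm y" if y: "y \<in> X j" for y
  proof -
    have "A j j (res j y) = sm l (res j y) - y"
      using shift_res[OF j y] unfolding shift_def by (simp add: algebra_simps)
    then have "norm (A j j (res j y)) \<le> cmod l * norm (res j y) + norm y"
      using norm_triangle_ineq4[of "sm l (res j y)" y] by (simp add: norm_sm)
    also have "\<dots> \<le> cmod l * (C * norm y) + norm y"
      using C[OF y] by (simp add: mult_left_mono)
    also have "\<dots> = (cmod l * C + 1) * norm y" by (simp add: algebra_simps)
    finally have "norm (A j j (res j y)) \<le> (cmod l * C + 1) * norm y" .
    then have "\<alpha> * norm (res j y) + \<beta> * norm (A j j (res j y))
        \<le> \<alpha> * (C * norm y) + \<beta> * ((cmod l * C + 1) * norm y)"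
      using C[OF y] \<open>\<alpha> \<ge> 0\<close> \<open>\<beta> \<ge> 0\<close> by (intro add_mono mult_left_mono)
    with rel[OF res_in_Dom[OF j y]] show ?thesis
      unfolding AR_def by (simp add: algebra_simps)
  qed
  then show ?thesis unfolding bounded_on_def by blast
qed

definition matrix_shift :: "(nat \<Rightarrow> 'a) \<Rightarrow> nat \<Rightarrow> 'a" where
  "matrix_shift x = prodsm sm l x - blockop A id n x"

lemma matrix_shift_apply:
  "matrix_shift x i = (if i \<in> {1..n} then sm l (x i) - (\<Sum>j\<in>{1..n}. A i j (x j)) else sm l (x i))"
  unfolding matrix_shift_def prodsm_def blockop_def by simp

lemma matrix_shift_in_direct_sum:
  assumes "x \<in> full_domain"
  shows "matrix_shift x \<in> full_space"
  unfolding mem_direct_sum_iff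
proof (intro conjI ballI allI impI)
  fix i assume i: "i \<in> {1..n}"
  have x: "x j \<in> Dom j j" if "j \<in> {1..n}" for j using assms that by (simp add: mem_direct_sum_iff)
  have "sm l (x i) \<in> X i"
    using X_csubspace[OF i] Dom_diag_subset[OF i] x[OF i] unfolding csubspace_def by blast
  moreover have "(\<Sum>j\<in>{1..n}. A i j (x j)) \<in> X i"
    using x by (intro subspace_sum[OF subspace_X[OF i]] linear_on_imageD[OF linear_on_A[OF i]])
  ultimately show "matrix_shift x i \<in> X i"
    unfolding matrix_shift_apply using i subspace_diff[OF subspace_X[OF i]] by simp
next
  fix i assume i: "i \<notin> {1..n}"
  then have "x i = 0" using assms unfolding mem_direct_sum_iff by blast
  then show "matrix_shift x i = 0" unfolding matrix_shift_apply if_not_P[OF i] by (simp add: sm_zero_right)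
qed

end

locale outside_schur_set = resolvent_point +
  fixes k :: nat
  assumes k_in: "k \<in> {1..n}"
    and Rstar_less_1: "j \<in> {1..n} - {k} \<Longrightarrow> Rstar sm n X Dom A k j l < 1"
begin

abbreviation J :: "nat set" where
  "J \<equiv> {1..n} - {k}"

abbreviation reduced_space :: "(nat \<Rightarrow> 'a) set" where
  "reduced_space \<equiv> direct_sum J X"

lemma sum_split_k: "sum f {1..n} = f k + sum f J"
  using k_in by (simp add: sum.remove)

lemma prodnorm_split_k: "prodnorm n y = norm (y k) + (\<Sum>i\<in>J. norm (y i))"
  unfolding prodnorm_def by (rule sum_split_k)

lemma norm_le_prodnorm: "norm (y k) \<le> prodnorm n y" "(\<Sum>i\<in>J. norm (y i)) \<le> prodnorm n y"
  unfolding prodnorm_split_k by (simp_all add: sum_nonneg)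

definition M :: "nat \<Rightarrow> nat \<Rightarrow> 'a \<Rightarrow> 'a" where
  "M i j y = (if i = j then 0 else AR i j y) + AR i k (AR k j y)"

definition entry_bound :: "nat \<Rightarrow> nat \<Rightarrow> real" where
  "entry_bound i j = opnorm_on (X j) (\<lambda>y. AR i k (AR k j y))
     + (if i = j then 0 else opnorm_on (X j) (AR i j))"

lemma Rstar_eq_column_sum: "Rstar sm n X Dom A k j l = (\<Sum>i\<in>J. entry_bound i j)"
  unfolding Rstar_def entry_bound_def AR_def[abs_def] res_def comp_def ..

lemma linear_on_AR_AR:
  "i \<in> {1..n} \<Longrightarrow> j \<in> {1..n} \<Longrightarrow> linear_on (X j) (X i) (\<lambda>y. AR i k (AR k j y))"
  using linear_on_compose[OF linear_on_AR linear_on_AR] k_in by blast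

lemma bounded_on_AR_AR:
  "i \<in> J \<Longrightarrow> j \<in> J \<Longrightarrow> bounded_on (X j) (\<lambda>y. AR i k (AR k j y))"
  using bounded_on_compose[OF bounded_on_AR bounded_on_AR] AR_in_X k_in by blast

lemma linear_on_M:
  assumes "i \<in> J" "j \<in> J"
  shows "linear_on (X j) (X i) (M i j)"
proof -
  have "linear_on (X j) (X i) (\<lambda>y. if i = j then 0 else AR i j y)"
    using assms linear_on_zero_fun[OF subspace_X] linear_on_AR by (cases "i = j") auto
  then show ?thesis
    unfolding M_def[abs_def] using assms by (intro linear_on_add_fun linear_on_AR_AR subspace_X) auto
qed

lemma norm_M_le:
  assumes i: "i \<in> J" and j: "j \<in> J" and y: "y \<in> X j"
  shows "norm (M i j y) \<le> entry_bound i j * norm y"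
proof -
  have "norm (AR i k (AR k j y)) \<le> opnorm_on (X j) (\<lambda>y. AR i k (AR k j y)) * norm y"
    using norm_le_opnorm_on[OF subspace_X linear_on_AR_AR bounded_on_AR_AR[OF i j] y] i j by blast
  moreover have "norm (AR i j y) \<le> opnorm_on (X j) (AR i j) * norm y" if "i \<noteq> j"
    using norm_le_opnorm_on[OF subspace_X linear_on_AR bounded_on_AR[OF _ _ that] y] i j by blast
  ultimately show ?thesis
    unfolding M_def entry_bound_def distrib_right
    by (cases "i = j") (auto intro: order_trans[OF norm_triangle_ineq])
qed

text \<open>The \<open>0\<close> keeps the maximum meaningful when \<open>J\<close> is empty.\<close>
definition contraction_const :: real where
  "contraction_const = Max (insert 0 ((\<lambda>j. \<Sum>i\<in>J. entry_bound i j) ` J))"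

lemma column_sum_le_contraction_const: "j \<in> J \<Longrightarrow> (\<Sum>i\<in>J. entry_bound i j) \<le> contraction_const"
  unfolding contraction_const_def by (rule Max_ge) auto

lemma contraction_const_less_1: "contraction_const < 1"
  unfolding contraction_const_def using Rstar_less_1 by (simp add: Rstar_eq_column_sum)

lemma sum_norm_M_le:
  assumes u: "\<And>j. j \<in> J \<Longrightarrow> u j \<in> X j"
  shows "(\<Sum>i\<in>J. norm (\<Sum>j\<in>J. M i j (u j))) \<le> contraction_const * (\<Sum>j\<in>J. norm (u j))"
proof -
  have "(\<Sum>i\<in>J. norm (\<Sum>j\<in>J. M i j (u j))) \<le> (\<Sum>i\<in>J. \<Sum>j\<in>J. entry_bound i j * norm (u j))"
    using norm_M_le u by (intro sum_mono order_trans[OF norm_sum]) auto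
  also have "\<dots> = (\<Sum>j\<in>J. (\<Sum>i\<in>J. entry_bound i j) * norm (u j))"
    by (subst sum.swap) (simp add: sum_distrib_right)
  also have "\<dots> \<le> (\<Sum>j\<in>J. contraction_const * norm (u j))"
    using column_sum_le_contraction_const by (intro sum_mono mult_right_mono) auto
  finally show ?thesis by (simp add: sum_distrib_left)
qed

definition reduced_map :: "(nat \<Rightarrow> 'a) \<Rightarrow> (nat \<Rightarrow> 'a) \<Rightarrow> nat \<Rightarrow> 'a" where
  "reduced_map y u i = (if i \<in> J then y i + AR i k (y k) + (\<Sum>j\<in>J. M i j (u j)) else 0)"

lemma reduced_map_in_direct_sum:
  assumes y: "y \<in> full_space" and u: "u \<in> reduced_space"
  shows "reduced_map y u \<in> reduced_space"
  unfolding mem_direct_sum_iff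
proof (intro conjI ballI allI impI)
  fix i assume i: "i \<in> J"
  have "y i \<in> X i" "AR i k (y k) \<in> X i"
    using y i k_in AR_in_X unfolding mem_direct_sum_iff by auto
  moreover have "(\<Sum>j\<in>J. M i j (u j)) \<in> X i"
    using u i linear_on_imageD[OF linear_on_M] unfolding mem_direct_sum_iff
    by (intro subspace_sum[OF subspace_X]) auto
  ultimately show "reduced_map y u i \<in> X i"
    unfolding reduced_map_def using i subspace_add[OF subspace_X] by simp
next
  fix i assume "i \<notin> J"
  then show "reduced_map y u i = 0" unfolding reduced_map_def by (simp only: if_False)
qed

lemma reduced_map_contraction:
  assumes u: "u \<in> reduced_space" and v: "v \<in> reduced_space"
  shows "l1_dist J (reduced_map y u) (reduced_map y v) \<le> contraction_const * l1_dist J u v"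
proof -
  have diff: "u j - v j \<in> X j" if "j \<in> J" for j
    using u v that subspace_diff[OF subspace_X] unfolding mem_direct_sum_iff by auto
  have "reduced_map y u i - reduced_map y v i = (\<Sum>j\<in>J. M i j (u j - v j))" if i: "i \<in> J" for i
  proof -
    have "reduced_map y u i - reduced_map y v i = (\<Sum>j\<in>J. M i j (u j) - M i j (v j))"
      unfolding reduced_map_def using i by (simp add: sum_subtractf)
    also have "\<dots> = (\<Sum>j\<in>J. M i j (u j - v j))"
      using u v i linear_on_diff[OF linear_on_M subspace_X] unfolding mem_direct_sum_iff
      by (intro sum.cong) auto
    finally show ?thesis .
  qed
  then have "l1_dist J (reduced_map y u) (reduced_map y v) = (\<Sum>i\<in>J. norm (\<Sum>j\<in>J. M i j (u j - v j)))"
    unfolding l1_dist_def by simp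
  also have "\<dots> \<le> contraction_const * l1_dist J u v"
    unfolding l1_dist_def using diff by (rule sum_norm_M_le)
  finally show ?thesis .
qed

lemma reduced_map_fixpoint:
  assumes "y \<in> full_space"
  obtains u where "u \<in> reduced_space" "reduced_map y u = u"
proof -
  interpret Metric_space "reduced_space" "l1_dist J" by (simp add: Metric_space_l1_dist)
  have "(\<lambda>_. 0) \<in> reduced_space" unfolding mem_direct_sum_iff using subspace_0[OF subspace_X] by auto
  then show thesis
    using Banach_fixedpoint_thm[OF mcomplete_l1_dist _ _ contraction_const_less_1 reduced_map_contraction]
      reduced_map_in_direct_sum[OF assms] X_closed that by blast
qed

lemma reduced_map_fixpoint_unique:
  assumes "u \<in> reduced_space" "v \<in> reduced_space" "reduced_map y u = u" "reduced_map y v = v"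
    and "y \<in> full_space"
  shows "u = v"
proof -
  interpret Metric_space "reduced_space" "l1_dist J" by (simp add: Metric_space_l1_dist)
  show ?thesis
    using contraction_imp_unique_fixpoint[OF assms(3,4) _ contraction_const_less_1 reduced_map_contraction]
      reduced_map_in_direct_sum[OF assms(5)] assms(1,2) by blast
qed

definition lift :: "(nat \<Rightarrow> 'a) \<Rightarrow> (nat \<Rightarrow> 'a) \<Rightarrow> nat \<Rightarrow> 'a" where
  "lift y u j = (if j \<in> J then res j (u j)
     else if j = k then res k (y k + (\<Sum>i\<in>J. AR k i (u i))) else 0)"

definition diag_shift :: "(nat \<Rightarrow> 'a) \<Rightarrow> nat \<Rightarrow> 'a" where
  "diag_shift x j = (if j \<in> J then shift j (x j) else 0)"

lemma sum_AR_in_X: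
  assumes "u \<in> reduced_space" "i \<in> {1..n}"
  shows "(\<Sum>j\<in>J. AR i j (u j)) \<in> X i"
  using assms AR_in_X unfolding mem_direct_sum_iff
  by (intro subspace_sum[OF subspace_X]) auto

lemma lift_k_arg_in_X:
  assumes "z \<in> X k" "u \<in> reduced_space"
  shows "z + (\<Sum>j\<in>J. AR k j (u j)) \<in> X k"
  using assms k_in sum_AR_in_X by (intro subspace_add[OF subspace_X]) auto

lemma lift_in_direct_sum:
  assumes "y k \<in> X k" "u \<in> reduced_space"
  shows "lift y u \<in> full_domain"
  using assms k_in res_in_Dom lift_k_arg_in_X[OF assms]
  unfolding mem_direct_sum_iff lift_def by auto

lemma matrix_shift_row_split:
  assumes "i \<in> {1..n}"
  shows "matrix_shift x i = shift i (x i) - (\<Sum>j\<in>{1..n} - {i}. A i j (x j))"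
  using assms by (simp add: matrix_shift_apply shift_def sum.remove algebra_simps)

lemma matrix_shift_lift_k:
  assumes "y k \<in> X k" "u \<in> reduced_space"
  shows "matrix_shift (lift y u) k = y k"
proof -
  have "(\<Sum>j\<in>J. A k j (lift y u j)) = (\<Sum>j\<in>J. AR k j (u j))"
    unfolding lift_def AR_def by (intro sum.cong) auto
  then show ?thesis
    using matrix_shift_row_split[OF k_in] shift_res[OF k_in lift_k_arg_in_X[OF assms]]
    by (simp add: lift_def)
qed

lemma matrix_shift_lift_J:
  assumes y: "y k \<in> X k" and u: "u \<in> reduced_space" and i: "i \<in> J"
  shows "matrix_shift (lift y u) i = y i + u i - reduced_map y u i"
proof -
  let ?v = "y k + (\<Sum>j\<in>J. AR k j (u j))"
  have uX: "\<And>j. j \<in> J \<Longrightarrow> u j \<in> X j" using direct_sum_memD[OF u] .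
  have sum_eq: "(\<Sum>j\<in>{1..n} - {i}. A i j (lift y u j))
      = AR i k ?v + (\<Sum>j\<in>J. if i = j then 0 else AR i j (u j))"
  proof -
    have "{1..n} - {i} = insert k (J - {i})" using i k_in by auto
    moreover have "(\<Sum>j\<in>J. if i = j then 0 else AR i j (u j)) = (\<Sum>j\<in>J - {i}. AR i j (u j))"
      using i by (simp add: sum.remove)
    ultimately show ?thesis by (simp add: lift_def AR_def)
  qed
  have AR_v: "AR i k ?v = AR i k (y k) + (\<Sum>j\<in>J. AR i k (AR k j (u j)))"
    using linear_on_add[OF linear_on_AR[of i k] y sum_AR_in_X[OF u k_in]] i k_in
      linear_on_sum[OF linear_on_AR[of i k] subspace_X[OF k_in], of J "\<lambda>j. AR k j (u j)"]
      AR_in_X[OF k_in _ uX] by simp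
  have "matrix_shift (lift y u) i = shift i (res i (u i)) - (\<Sum>j\<in>{1..n} - {i}. A i j (lift y u j))"
    using i matrix_shift_row_split[of i] by (simp add: lift_def)
  also have "\<dots> = u i - (AR i k (y k) + (\<Sum>j\<in>J. M i j (u j)))"
    using i shift_res[OF _ uX[OF i]] unfolding sum_eq AR_v by (simp add: M_def sum.distrib)
  also have "\<dots> = y i + u i - reduced_map y u i"
    using i by (simp add: reduced_map_def)
  finally show ?thesis .
qed

lemma matrix_shift_lift:
  assumes y: "y \<in> full_space" and u: "u \<in> reduced_space" and fixed: "reduced_map y u = u"
  shows "matrix_shift (lift y u) = y"
proof
  fix i
  have yk: "y k \<in> X k" using direct_sum_memD[OF y k_in] .
  consider "i = k" | "i \<in> J" | "i \<notin> {1..n}" by blast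
  then show "matrix_shift (lift y u) i = y i"
  proof cases
    case 1
    then show ?thesis using matrix_shift_lift_k[of y u, OF yk u] by simp
  next
    case 2
    then show ?thesis using matrix_shift_lift_J[of y u, OF yk u] fixed by simp
  next
    case 3
    have "matrix_shift (lift y u) \<in> full_space"
      by (rule matrix_shift_in_direct_sum[OF lift_in_direct_sum[of y u, OF yk u]])
    with 3 y show ?thesis unfolding mem_direct_sum_iff by simp
  qed
qed

lemma diag_shift_in_direct_sum:
  assumes "x \<in> full_domain"
  shows "diag_shift x \<in> reduced_space"
  using assms linear_on_imageD[OF linear_on_shift] unfolding mem_direct_sum_iff diag_shift_def by auto

lemma lift_diag_shift:
  assumes x: "x \<in> full_domain" and "matrix_shift x = y"
  shows "lift y (diag_shift x) = x"
proof
  fix j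
  have xD: "\<And>j. j \<in> {1..n} \<Longrightarrow> x j \<in> Dom j j" using direct_sum_memD[OF x] .
  have AR_shift: "AR i j (diag_shift x j) = A i j (x j)" if "j \<in> J" for i j
    using that res_shift xD unfolding AR_def diag_shift_def by simp
  have "shift k (x k) = y k + (\<Sum>j\<in>J. AR k j (diag_shift x j))"
    using matrix_shift_row_split[OF k_in, of x] \<open>matrix_shift x = y\<close> AR_shift
    by (simp add: algebra_simps)
  then have "res k (y k + (\<Sum>j\<in>J. AR k j (diag_shift x j))) = x k"
    using res_shift[OF k_in xD[OF k_in]] by simp
  then show "lift y (diag_shift x) j = x j"
    using x res_shift xD unfolding lift_def diag_shift_def mem_direct_sum_iff by auto
qed

lemma reduced_map_diag_shift:
  assumes x: "x \<in> full_domain" and y: "matrix_shift x = y"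
  shows "reduced_map y (diag_shift x) = diag_shift x"
proof
  fix i
  have yk: "y k \<in> X k" using matrix_shift_in_direct_sum[OF x] y k_in unfolding mem_direct_sum_iff by blast
  show "reduced_map y (diag_shift x) i = diag_shift x i"
  proof (cases "i \<in> J")
    case True
    then show ?thesis
      using matrix_shift_lift_J[of y "diag_shift x", OF yk diag_shift_in_direct_sum[OF x] True] lift_diag_shift[OF x y] y
      by simp
  next
    case False
    then show ?thesis unfolding reduced_map_def diag_shift_def by (simp only: if_False)
  qed
qed

lemma solution_eq_lift:
  assumes y: "y \<in> full_space" and x: "x \<in> full_domain"
    and "matrix_shift x = y" and u: "u \<in> reduced_space" "reduced_map y u = u"
  shows "x = lift y u"
  using lift_diag_shift[OF x \<open>matrix_shift x = y\<close>]
    reduced_map_fixpoint_unique[OF diag_shift_in_direct_sum[OF x] u(1)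
      reduced_map_diag_shift[OF x \<open>matrix_shift x = y\<close>] u(2) y]
  by simp

lemma lift_bounded:
  obtains C where "\<And>y u. y \<in> full_space \<Longrightarrow> u \<in> reduced_space \<Longrightarrow>
    prodnorm n (lift y u) \<le> C * (prodnorm n y + (\<Sum>j\<in>J. norm (u j)))"
proof -
  obtain Cr where "Cr \<ge> 0" and Cr: "\<And>j z. j \<in> {1..n} \<Longrightarrow> z \<in> X j \<Longrightarrow> norm (res j z) \<le> Cr * norm z"
    using bounded_on_uniform[of "{1..n}" X res, OF finite_atLeastAtMost bounded_on_res] by blast
  have "\<And>j. j \<in> J \<Longrightarrow> bounded_on (X j) (AR k j)" using bounded_on_AR k_in by auto
  then obtain Ca where "Ca \<ge> 0" and Ca: "\<And>j z. j \<in> J \<Longrightarrow> z \<in> X j \<Longrightarrow> norm (AR k j z) \<le> Ca * norm z"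
    using bounded_on_uniform[of J X "AR k"] by blast
  have "prodnorm n (lift y u) \<le> (Cr * (1 + Ca)) * (prodnorm n y + (\<Sum>j\<in>J. norm (u j)))"
    if y: "y \<in> full_space" and u: "u \<in> reduced_space" for y u
  proof -
    define P where "P = prodnorm n y"
    define U where "U = (\<Sum>j\<in>J. norm (u j))"
    have uX: "\<And>j. j \<in> J \<Longrightarrow> u j \<in> X j" using direct_sum_memD[OF u] .
    have yk: "y k \<in> X k" using direct_sum_memD[OF y k_in] .
    have "P \<ge> 0" "U \<ge> 0" unfolding P_def U_def prodnorm_def by (simp_all add: sum_nonneg)
    have "norm (y k + (\<Sum>j\<in>J. AR k j (u j))) \<le> norm (y k) + (\<Sum>j\<in>J. norm (AR k j (u j)))"
      by (rule order_trans[OF norm_triangle_ineq add_left_mono[OF norm_sum]])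
    also have "\<dots> \<le> P + Ca * U"
      unfolding P_def U_def sum_distrib_left
      using norm_le_prodnorm(1) Ca uX by (intro add_mono sum_mono) auto
    finally have "norm (lift y u k) \<le> Cr * (P + Ca * U)"
      using Cr[OF k_in lift_k_arg_in_X[OF yk u]] \<open>Cr \<ge> 0\<close>
      by (simp add: lift_def order_trans[OF _ mult_left_mono])
    moreover have "(\<Sum>j\<in>J. norm (lift y u j)) \<le> Cr * U"
      unfolding U_def sum_distrib_left lift_def using Cr uX by (intro sum_mono) auto
    ultimately have "prodnorm n (lift y u) \<le> Cr * P + Cr * Ca * U + Cr * U"
      unfolding prodnorm_split_k by (simp add: algebra_simps)
    also have "\<dots> \<le> Cr * (1 + Ca) * (P + U)"
      using \<open>Cr \<ge> 0\<close> \<open>Ca \<ge> 0\<close> \<open>P \<ge> 0\<close> \<open>U \<ge> 0\<close> by (simp add: algebra_simps)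
    finally show ?thesis unfolding P_def U_def .
  qed
  then show thesis using that by blast
qed

text \<open>The linear part of \<open>reduced_map y\<close> is a contraction, which bounds its fixed points by
  \<open>1 / (1 - contraction_const)\<close> times the inhomogeneity.\<close>
lemma reduced_map_fixpoint_bounded:
  obtains C where "\<And>y u. y \<in> full_space \<Longrightarrow> u \<in> reduced_space \<Longrightarrow>
    reduced_map y u = u \<Longrightarrow> (\<Sum>j\<in>J. norm (u j)) \<le> C * prodnorm n y"
proof -
  have "\<And>i. i \<in> J \<Longrightarrow> bounded_on (X k) (AR i k)" using bounded_on_AR k_in by auto
  then obtain Cb where "Cb \<ge> 0" and Cb: "\<And>i z. i \<in> J \<Longrightarrow> z \<in> X k \<Longrightarrow> norm (AR i k z) \<le> Cb * norm z"
    using bounded_on_uniform[of J "\<lambda>_. X k" "\<lambda>i. AR i k"] by blast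
  define C where "C = (1 + real (card J) * Cb) / (1 - contraction_const)"
  have "(\<Sum>j\<in>J. norm (u j)) \<le> C * prodnorm n y"
    if y: "y \<in> full_space" and u: "u \<in> reduced_space" and fixed: "reduced_map y u = u" for y u
  proof -
    define P where "P = prodnorm n y"
    define U where "U = (\<Sum>j\<in>J. norm (u j))"
    have uX: "\<And>j. j \<in> J \<Longrightarrow> u j \<in> X j" using direct_sum_memD[OF u] .
    have yk: "y k \<in> X k" using direct_sum_memD[OF y k_in] .
    have u_le: "norm (u i) \<le> norm (y i) + Cb * norm (y k) + norm (\<Sum>j\<in>J. M i j (u j))"
      if i: "i \<in> J" for i
    proof -
      have "y i + AR i k (y k) + (\<Sum>j\<in>J. M i j (u j)) = u i"
        using fixed i unfolding reduced_map_def fun_eq_iff by metis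
      moreover have "norm (y i + AR i k (y k) + (\<Sum>j\<in>J. M i j (u j)))
          \<le> norm (y i) + Cb * norm (y k) + norm (\<Sum>j\<in>J. M i j (u j))"
        using norm_triangle_ineq[of "y i + AR i k (y k)" "\<Sum>j\<in>J. M i j (u j)"]
          norm_triangle_ineq[of "y i" "AR i k (y k)"] Cb[OF i yk] by linarith
      ultimately show ?thesis by simp
    qed
    have "U \<le> (\<Sum>i\<in>J. norm (y i) + Cb * norm (y k) + norm (\<Sum>j\<in>J. M i j (u j)))"
      unfolding U_def by (rule sum_mono) (rule u_le)
    also have "\<dots> = (\<Sum>i\<in>J. norm (y i)) + real (card J) * Cb * norm (y k)
        + (\<Sum>i\<in>J. norm (\<Sum>j\<in>J. M i j (u j)))"
      by (simp add: sum.distrib)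
    also have "\<dots> \<le> P + real (card J) * Cb * P + contraction_const * U"
      unfolding P_def U_def using norm_le_prodnorm sum_norm_M_le[OF uX] \<open>Cb \<ge> 0\<close>
      by (intro add_mono mult_left_mono) auto
    finally have "(1 - contraction_const) * U \<le> (1 + real (card J) * Cb) * P"
      by (simp add: algebra_simps)
    then show ?thesis
      using contraction_const_less_1 unfolding C_def P_def U_def by (simp add: field_simps)
  qed
  then show thesis using that by blast
qed

lemma lift_solves:
  assumes "y \<in> full_space" "u \<in> reduced_space" "reduced_map y u = u"
  shows "lift y u \<in> full_domain" "matrix_shift (lift y u) = y"
  using assms lift_in_direct_sum[of y u] direct_sum_memD[OF assms(1) k_in] matrix_shift_lift by auto

lemma inj_on_matrix_shift: "inj_on matrix_shift full_domain"
proof (rule inj_onI)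
  fix x x' assume x: "x \<in> full_domain" and x': "x' \<in> full_domain"
    and eq: "matrix_shift x = matrix_shift x'"
  have y: "matrix_shift x \<in> full_space" by (rule matrix_shift_in_direct_sum[OF x])
  obtain u where u: "u \<in> reduced_space" "reduced_map (matrix_shift x) u = u"
    using reduced_map_fixpoint[OF y] by blast
  show "x = x'"
    using solution_eq_lift[OF y x refl u] solution_eq_lift[OF y x' eq[symmetric] u] by simp
qed

lemma matrix_shift_image: "matrix_shift ` full_domain = full_space"
proof
  show "matrix_shift ` full_domain \<subseteq> full_space" using matrix_shift_in_direct_sum by blast
next
  show "full_space \<subseteq> matrix_shift ` full_domain"
  proof
    fix y assume y: "y \<in> full_space"
    obtain u where u: "u \<in> reduced_space" "reduced_map y u = u"
      using reduced_map_fixpoint[OF y] by blast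
    show "y \<in> matrix_shift ` full_domain"
      using image_eqI[where f = matrix_shift, OF lift_solves(2)[OF y u, symmetric] lift_solves(1)[OF y u]] .
  qed
qed

lemma inv_matrix_shift_bounded:
  "\<exists>C. \<forall>y\<in>full_space. prodnorm n (inv_into full_domain matrix_shift y) \<le> C * prodnorm n y"
proof -
  obtain C1 where C1: "\<And>y u. y \<in> full_space \<Longrightarrow> u \<in> reduced_space \<Longrightarrow>
      prodnorm n (lift y u) \<le> C1 * (prodnorm n y + (\<Sum>j\<in>J. norm (u j)))"
    using lift_bounded by blast
  obtain C2 where C2: "\<And>y u. y \<in> full_space \<Longrightarrow> u \<in> reduced_space \<Longrightarrow> reduced_map y u = u \<Longrightarrow>
      (\<Sum>j\<in>J. norm (u j)) \<le> C2 * prodnorm n y"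
    using reduced_map_fixpoint_bounded by blast
  have "prodnorm n (inv_into full_domain matrix_shift y) \<le> (\<bar>C1\<bar> * (1 + C2)) * prodnorm n y"
    if y: "y \<in> full_space" for y
  proof -
    obtain u where u: "u \<in> reduced_space" "reduced_map y u = u"
      using reduced_map_fixpoint[OF y] by blast
    have "0 \<le> prodnorm n y + (\<Sum>j\<in>J. norm (u j))" by (simp add: prodnorm_def sum_nonneg)
    then have "prodnorm n (lift y u) \<le> \<bar>C1\<bar> * (prodnorm n y + (\<Sum>j\<in>J. norm (u j)))"
      using C1[OF y u(1)] by (meson abs_ge_self mult_right_mono order_trans)
    also have "\<dots> \<le> \<bar>C1\<bar> * (prodnorm n y + C2 * prodnorm n y)"
      using C2[OF y u] by (simp add: mult_left_mono)
    also have "inv_into full_domain matrix_shift y = lift y u"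
      by (rule inv_into_f_eq[OF inj_on_matrix_shift]) (use lift_solves[OF y u] in auto)
    ultimately show ?thesis by (simp add: algebra_simps)
  qed
  then show ?thesis by blast
qed

theorem not_in_gspec:
  "l \<notin> gspec (prodsm sm) (prodnorm n) (prodsp X id n) (blockdom Dom id n) (blockop A id n)"
proof -
  have "bij_betw matrix_shift full_domain full_space"
    using inj_on_matrix_shift matrix_shift_image by (simp add: bij_betw_def)
  then show ?thesis
    using inv_matrix_shift_bounded
    unfolding gspec_def prodsp_id_eq blockdom_id_eq matrix_shift_def[abs_def] by simp
qed

end

lemma (in operator_matrix) outside_schur_set_if_not_in_Sstar:
  assumes "n \<ge> 2" "k \<in> {1..n}" "l \<notin> Sstar sm n X Dom A k"
  shows "outside_schur_set sm n X Dom A l k"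
proof -
  have not_in: "l \<notin> Sstar2 sm n X Dom A k j" if "j \<in> {1..n} - {k}" for j
    using assms(3) that unfolding Sstar_def by blast
  obtain j0 where j0: "j0 \<in> {1..n} - {k}"
    using assms(1,2) that[of 1] that[of 2] by (cases "k = 1") auto
  have "l \<notin> gspec sm norm (X j) (Dom j j) (A j j)" if "j \<in> {1..n}" for j
    using not_in[OF j0] not_in[of j] that unfolding Sstar2_def Let_def by (cases "j = k") auto
  moreover have "Rstar sm n X Dom A k j l < 1" if "j \<in> {1..n} - {k}" for j
    using not_in[OF that] unfolding Sstar2_def Let_def by auto
  ultimately show ?thesis
    using assms(2) by unfold_locales
qed

theorem theorem5p2:
  fixes sm :: "complex \<Rightarrow> 'a::banach \<Rightarrow> 'a"
    and n :: nat
    and X :: "nat \<Rightarrow> 'a set"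
    and Dom :: "nat \<Rightarrow> nat \<Rightarrow> 'a set"
    and A :: "nat \<Rightarrow> nat \<Rightarrow> 'a \<Rightarrow> 'a"
  assumes cb: "cbanach sm"
    and n2: "n \<ge> 2"
    and Xsub: "\<And>i. i \<in> {1..n} \<Longrightarrow> csubspace sm (X i) \<and> closed (X i)"
    and Dsub: "\<And>i j. i \<in> {1..n} \<Longrightarrow> j \<in> {1..n} \<Longrightarrow> Dom i j \<subseteq> X j"
    and Amap: "\<And>i j. i \<in> {1..n} \<Longrightarrow> j \<in> {1..n} \<Longrightarrow> A i j ` Dom i j \<subseteq> X i"
    and Alin: "\<And>i j. i \<in> {1..n} \<Longrightarrow> j \<in> {1..n} \<Longrightarrow> clinear_on sm (Dom i j) (A i j)"
    and Aclosed: "\<And>i. i \<in> {1..n} \<Longrightarrow> closed_op norm (X i) (Dom i i) (A i i)"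
    and Arel: "\<And>i j. i \<in> {1..n} \<Longrightarrow> j \<in> {1..n} \<Longrightarrow> i \<noteq> j \<Longrightarrow>
        Dom j j \<subseteq> Dom i j \<and> (\<exists>\<alpha> \<beta>. \<alpha> \<ge> 0 \<and> \<beta> \<ge> 0 \<and>
          (\<forall>x\<in>Dom j j. norm (A i j x) \<le> \<alpha> * norm x + \<beta> * norm (A j j x)))"
    and perm_closed: "\<And>p k. p permutes {1..n} \<Longrightarrow> k \<in> {2..n} \<Longrightarrow>
        closed_op (prodnorm k) (prodsp X (inv p) k) (blockdom Dom (inv p) k) (blockop A (inv p) k)"
  shows "gspec (prodsm sm) (prodnorm n) (prodsp X id n) (blockdom Dom id n) (blockop A id n)
           \<subseteq> (\<Inter>k\<in>{1..n}. Sstar sm n X Dom A k)"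
proof -
  have "operator_matrix sm n X Dom A"
  proof
    fix i j assume "i \<in> {1..n}" "j \<in> {1..n}"
    then show "Dom j j \<subseteq> Dom i j" using Arel by (cases "i = j") auto
  qed (use cb Xsub Dsub Amap Alin Arel in auto)
  then show ?thesis
    using operator_matrix.outside_schur_set_if_not_in_Sstar[OF _ n2] outside_schur_set.not_in_gspec by blast
qed

end
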